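(* Let $0\le\epsilon\le1/3$, let $f(x)=\frac{1+\epsilon-2x}{1-\epsilon}$, and for an integer $n\ge1$ define the polynomial $C_n(x):=1-\frac{T_n(f(x))}{T_n(f(0))}$, where $T_n$ is the Chebyshev polynomial of degree $n$. Then for any sequence $\boldsymbol\lambda=(\lambda_1,\dots,\lambda_d)$ with $0\le\lambda_i\le1$, $$\gamma_2(\mathcal D_{C_n,\boldsymbol\lambda})\le6n^2-3.$$
   Context: The Chebyshev polynomial $T_n$ is defined by $T_n(\cos\theta)=\cos(n\theta)$. For a continuously differentiable $h$ and a sequence $\boldsymbol\lambda=(\lambda_1,\dots,\lambda_d)$, $\mathcal D_{h,\boldsymbol\lambda}$ is the $d\times d$ matrix with entries $(\mathcal D_{h,\boldsymbol\lambda})_{ij}=\frac{h(\lambda_i)-h(\lambda_j)}{\lambda_i-\lambda_j}$ if $\lambda_i\ne\lambda_j$ and $h'(\lambda_i)$ if $\lambda_i=\lambda_j$. For a $d\times d$ matrix $\mathbf M$, $\gamma_2(\mathbf M)=\inf\max\big(\{\|v_i\|^2:1\le i\le d\}\cup\{\|w_j\|^2:1\le j\le d\}\big)$, the infimum over all families of vectors $v_i,w_j$ with $\mathbf M_{ij}=\langle v_i|w_j\rangle$ for all $i,j$. *)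

theory Defs
  imports "HOL-Analysis.Analysis" "HOL-Computational_Algebra.Polynomial"
begin

fun cheb_T :: "nat \<Rightarrow> real poly" where
  "cheb_T 0 = 1"
| "cheb_T (Suc 0) = [:0, 1:]"
| "cheb_T (Suc (Suc n)) = [:0, 2:] * cheb_T (Suc n) - cheb_T n"

definition cheb_f :: "real \<Rightarrow> real \<Rightarrow> real" where
  "cheb_f \<epsilon> x = (1 + \<epsilon> - 2 * x) / (1 - \<epsilon>)"

definition C_poly :: "nat \<Rightarrow> real \<Rightarrow> real \<Rightarrow> real" where
  "C_poly n \<epsilon> x = 1 - poly (cheb_T n) (cheb_f \<epsilon> x) / poly (cheb_T n) (cheb_f \<epsilon> 0)"

definition divdiff_mat :: "(real \<Rightarrow> real) \<Rightarrow> (nat \<Rightarrow> real) \<Rightarrow> nat \<Rightarrow> nat \<Rightarrow> real" where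
  "divdiff_mat h lam i j =
     (if lam i \<noteq> lam j then (h (lam i) - h (lam j)) / (lam i - lam j) else deriv h (lam i))"

text \<open>gamma_2 factorization norm of a d x d matrix M (indices below d): infimum over all
  factorizations M i j = <v_i, w_j> with vectors in R^m (any m) of the largest squared norm.\<close>
definition gamma2 :: "nat \<Rightarrow> (nat \<Rightarrow> nat \<Rightarrow> real) \<Rightarrow> real" where
  "gamma2 d M = Inf {c. 0 \<le> c \<and> (\<exists>(m::nat) (v::nat \<Rightarrow> nat \<Rightarrow> real) (w::nat \<Rightarrow> nat \<Rightarrow> real).
      (\<forall>i<d. \<forall>j<d. M i j = (\<Sum>k<m. v i k * w j k)) \<and>
      (\<forall>i<d. (\<Sum>k<m. (v i k)\<^sup>2) \<le> c) \<and> (\<forall>j<d. (\<Sum>k<m. (w j k)\<^sup>2) \<le> c))}"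

end

theory Submission
  imports Defs
begin

text \<open>Put Y = f(0) \<ge> 1. As f is affine, the divided differences of C_n at the \<lambda>_i are
  s = 2 / ((1 - \<epsilon>) T_n(Y)) times those of T_n at the points y_i = f(\<lambda>_i) \<in> [-1, Y], and
  T_n(x) - T_n(y) = (x - y) \<Sum>_{k<n} G_k(y) U_{n-1-k}(x) with G_0 = 1, G_k = 2 T_k: a factorization
  of length n. Every t \<in> [-1, Y] is (z + w)/2 with z w = 1 and |z|, |w| \<le> r = Y + sqrt (Y^2 - 1),
  whence |T_k(t)| \<le> r^k and |U_k(t)| \<le> (k + 1) r^k. Moving r^k from the second factor to the first,
  the rows have squared norm at most r^(2(n-1)) \<Sum>_{k\<le>n} k^2 and the columns at most s^2 (4n - 3);
  after rescaling, \<gamma>_2 is at most the geometric mean s r^(n-1) sqrt ((\<Sum>_{k\<le>n} k^2)(4n - 3)).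
  Finally 2 T_n(Y) \<ge> r^n and (1 - \<epsilon>) r \<ge> 1 give s r^(n-1) \<le> 4, enough for n \<ge> 2.\<close>

fun chebyshev_T :: "nat \<Rightarrow> 'a::comm_ring_1 \<Rightarrow> 'a" where
  "chebyshev_T 0 x = 1"
| "chebyshev_T (Suc 0) x = x"
| "chebyshev_T (Suc (Suc n)) x = 2 * x * chebyshev_T (Suc n) x - chebyshev_T n x"

fun chebyshev_U :: "nat \<Rightarrow> 'a::comm_ring_1 \<Rightarrow> 'a" where
  "chebyshev_U 0 x = 1"
| "chebyshev_U (Suc 0) x = 2 * x"
| "chebyshev_U (Suc (Suc n)) x = 2 * x * chebyshev_U (Suc n) x - chebyshev_U n x"

lemma poly_cheb_T: "poly (cheb_T n) x = chebyshev_T n x"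
  by (induction n rule: cheb_T.induct) (auto simp: algebra_simps)

lemma of_real_chebyshev_T: "of_real (chebyshev_T n x) = (chebyshev_T n (of_real x) :: 'a::real_field)"
  by (induction n x rule: chebyshev_T.induct) auto

lemma of_real_chebyshev_U: "of_real (chebyshev_U n x) = (chebyshev_U n (of_real x) :: 'a::real_field)"
  by (induction n x rule: chebyshev_U.induct) auto

lemma isCont_chebyshev_U [continuous_intros]:
  "isCont f a \<Longrightarrow> isCont (\<lambda>x. chebyshev_U n (f x) :: real) a"
  by (induction n rule: induct_nat_012) (auto intro!: continuous_intros)

definition complete_hom :: "'a::comm_ring_1 \<Rightarrow> 'a \<Rightarrow> nat \<Rightarrow> 'a" where
  "complete_hom z w k = (\<Sum>i\<le>k. z ^ i * w ^ (k - i))"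

lemma complete_hom_Suc: "complete_hom z w (Suc k) = z ^ Suc k + w * complete_hom z w k"
  unfolding complete_hom_def
  by (simp add: sum_distrib_left Suc_diff_le mult.left_commute)

lemma norm_complete_hom_le:
  fixes z w :: "'a::real_normed_field"
  assumes "norm z \<le> R" "norm w \<le> R"
  shows "norm (complete_hom z w k) \<le> real (Suc k) * R ^ k"
proof -
  have "norm (complete_hom z w k) \<le> (\<Sum>i\<le>k. R ^ i * R ^ (k - i))"
    unfolding complete_hom_def using assms
    by (intro sum_norm_le)
       (simp add: norm_mult norm_power mult_mono' power_mono order_trans[OF norm_ge_zero])
  also have "\<dots> = real (Suc k) * R ^ k"
    by (simp flip: power_add)
  finally show ?thesis .
qed

lemma chebyshev_T_param:
  assumes zw: "z * w = 1" and x: "z + w = 2 * x"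
  shows "2 * chebyshev_T n x = z ^ n + w ^ n"
proof (induction n rule: induct_nat_012)
  case (ge2 n)
  have "2 * chebyshev_T (Suc (Suc n)) x = (2 * x) * (2 * chebyshev_T (Suc n) x) - 2 * chebyshev_T n x"
    by (simp add: algebra_simps)
  also have "\<dots> = (z + w) * (z ^ Suc n + w ^ Suc n) - (z * w) * (z ^ n + w ^ n)"
    using ge2 zw x by simp
  also have "\<dots> = z ^ Suc (Suc n) + w ^ Suc (Suc n)"
    by (simp add: algebra_simps)
  finally show ?case .
qed (use x in auto)

lemma chebyshev_U_param:
  assumes zw: "z * w = 1" and x: "z + w = 2 * x"
  shows "chebyshev_U n x = complete_hom z w n"
proof (induction n rule: induct_nat_012)
  case 0
  then show ?case by (simp add: complete_hom_def)
next
  case 1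
  then show ?case using x by (simp add: complete_hom_def add.commute)
next
  case (ge2 n)
  have "chebyshev_U (Suc (Suc n)) x = (z + w) * complete_hom z w (Suc n) - complete_hom z w n"
    using ge2 x by simp
  also have "\<dots> = z * complete_hom z w (Suc n) + w * complete_hom z w (Suc n) - complete_hom z w n"
    by (simp add: distrib_right)
  also have "\<dots> = z ^ Suc (Suc n) + (z * w) * complete_hom z w n + w * complete_hom z w (Suc n) - complete_hom z w n"
    by (simp add: complete_hom_Suc[of z w n] algebra_simps)
  also have "\<dots> = complete_hom z w (Suc (Suc n))"
    using zw by (simp add: complete_hom_Suc[of z w "Suc n"])
  finally show ?case .
qed

lemma norm_chebyshev_T_le:
  fixes z w :: "'a::real_normed_field"
  assumes "z * w = 1" "z + w = 2 * x" "norm z \<le> R" "norm w \<le> R"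
  shows "norm (chebyshev_T n x) \<le> R ^ n"
proof -
  have "2 * norm (chebyshev_T n x) = norm (z ^ n + w ^ n)"
    using chebyshev_T_param[OF assms(1,2)] by (metis norm_mult norm_numeral)
  also have "\<dots> \<le> R ^ n + R ^ n"
    using assms by (intro norm_triangle_le add_mono) (auto simp: norm_power intro!: power_mono)
  finally show ?thesis by simp
qed

lemma norm_chebyshev_U_le:
  fixes z w :: "'a::real_normed_field"
  assumes "z * w = 1" "z + w = 2 * x" "norm z \<le> R" "norm w \<le> R"
  shows "norm (chebyshev_U n x) \<le> real (Suc n) * R ^ n"
  using chebyshev_U_param[OF assms(1,2)] norm_complete_hom_le[OF assms(3,4)] by simp

lemma chebyshev_parametrization:
  fixes Y t :: real
  assumes Y: "1 \<le> Y" and t: "-1 \<le> t" "t \<le> Y"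
  obtains z w :: complex where "z * w = 1" "z + w = 2 * of_real t"
    "norm z \<le> Y + sqrt (Y\<^sup>2 - 1)" "norm w \<le> Y + sqrt (Y\<^sup>2 - 1)"
proof (cases "t \<le> 1")
  case True
  define b where "b = sqrt (1 - t\<^sup>2)"
  have b2: "b\<^sup>2 = 1 - t\<^sup>2"
    unfolding b_def using True t by (simp add: abs_square_le_1)
  have "1 \<le> Y + sqrt (Y\<^sup>2 - 1)"
    using Y by (simp add: add_increasing2 one_le_power)
  moreover have "norm (Complex t b) = 1" "norm (Complex t (- b)) = 1"
    using b2 by (simp_all add: cmod_def)
  moreover have "Complex t b * Complex t (- b) = 1"
    using b2 by (simp add: complex_eq_iff power2_eq_square)
  ultimately show ?thesis
    by (intro that[of "Complex t b" "Complex t (- b)"]) (auto simp: complex_eq_iff)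
next
  case False
  define q where "q = sqrt (t\<^sup>2 - 1)"
  have t2: "1 \<le> t\<^sup>2"
    using False by (simp add: abs_square_le_1 abs_if)
  have q: "0 \<le> q" "q\<^sup>2 = t\<^sup>2 - 1" "q \<le> t"
    unfolding q_def using t2 False real_sqrt_le_mono[of "t\<^sup>2 - 1" "t\<^sup>2"] by auto
  have "(t + q) * (t - q) = 1"
    using q by (simp add: algebra_simps power2_eq_square)
  then have "complex_of_real (t + q) * complex_of_real (t - q) = 1"
    by (metis of_real_1 of_real_mult)
  moreover have "complex_of_real (t + q) + complex_of_real (t - q) = 2 * of_real t"
    by simp
  moreover have "q \<le> sqrt (Y\<^sup>2 - 1)"
    unfolding q_def using False t by (intro real_sqrt_le_mono power_mono) auto
  ultimately show ?thesis
    using q t False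
    by (intro that[of "of_real (t + q)" "of_real (t - q)"]) (auto simp del: of_real_add of_real_diff)
qed

lemma abs_chebyshev_T_le:
  fixes Y t :: real
  assumes "1 \<le> Y" "-1 \<le> t" "t \<le> Y"
  shows "\<bar>chebyshev_T n t\<bar> \<le> (Y + sqrt (Y\<^sup>2 - 1)) ^ n"
proof -
  obtain z w :: complex where "z * w = 1" "z + w = 2 * of_real t"
    "norm z \<le> Y + sqrt (Y\<^sup>2 - 1)" "norm w \<le> Y + sqrt (Y\<^sup>2 - 1)"
    using chebyshev_parametrization[OF assms] .
  from norm_chebyshev_T_le[OF this] show ?thesis
    by (simp flip: of_real_chebyshev_T)
qed

lemma abs_chebyshev_U_le:
  fixes Y t :: real
  assumes "1 \<le> Y" "-1 \<le> t" "t \<le> Y"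
  shows "\<bar>chebyshev_U n t\<bar> \<le> real (Suc n) * (Y + sqrt (Y\<^sup>2 - 1)) ^ n"
proof -
  obtain z w :: complex where "z * w = 1" "z + w = 2 * of_real t"
    "norm z \<le> Y + sqrt (Y\<^sup>2 - 1)" "norm w \<le> Y + sqrt (Y\<^sup>2 - 1)"
    using chebyshev_parametrization[OF assms] .
  from norm_chebyshev_U_le[OF this] show ?thesis
    by (simp flip: of_real_chebyshev_U)
qed

lemma chebyshev_T_ge:
  fixes Y :: real
  assumes "1 \<le> Y"
  shows "(Y + sqrt (Y\<^sup>2 - 1)) ^ n \<le> 2 * chebyshev_T n Y"
proof -
  define q where "q = sqrt (Y\<^sup>2 - 1)"
  have q: "q\<^sup>2 = Y\<^sup>2 - 1" "q \<le> Y"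
    unfolding q_def using assms real_sqrt_le_mono[of "Y\<^sup>2 - 1" "Y\<^sup>2"] by auto
  then have "(Y + q) * (Y - q) = 1"
    by (simp add: algebra_simps power2_eq_square)
  from chebyshev_T_param[OF this] q(2) show ?thesis
    unfolding q_def[symmetric] by simp
qed

lemma chebyshev_T_pos:
  fixes Y :: real
  assumes "1 \<le> Y"
  shows "0 < chebyshev_T n Y"
proof -
  have "1 \<le> (Y + sqrt (Y\<^sup>2 - 1)) ^ n"
    using assms by (simp add: add_increasing2 one_le_power)
  with chebyshev_T_ge[OF assms, of n] show ?thesis
    by simp
qed

definition cheb_weight :: "nat \<Rightarrow> 'a::comm_ring_1 \<Rightarrow> 'a" where
  "cheb_weight k y = (if k = 0 then 1 else 2 * chebyshev_T k y)"

definition chebyshev_T_slope :: "nat \<Rightarrow> 'a::comm_ring_1 \<Rightarrow> 'a \<Rightarrow> 'a" where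
  "chebyshev_T_slope n x y = (\<Sum>k<n. cheb_weight k y * chebyshev_U (n - 1 - k) x)"

lemma chebyshev_T_slope_Suc_Suc:
  "chebyshev_T_slope (Suc (Suc n)) x y =
     2 * x * chebyshev_T_slope (Suc n) x y + 2 * chebyshev_T (Suc n) y - chebyshev_T_slope n x y"
proof -
  let ?G = "\<lambda>k. cheb_weight k y" and ?U = "\<lambda>m. chebyshev_U m x"
  have "(\<Sum>k<n. ?G k * ?U (Suc n - k)) = (\<Sum>k<n. 2 * x * (?G k * ?U (n - k)) - ?G k * ?U (n - 1 - k))"
  proof (rule sum.cong)
    fix k assume "k \<in> {..<n}"
    then have "Suc n - k = Suc (Suc (n - 1 - k))" "n - k = Suc (n - 1 - k)"
      by auto
    then show "?G k * ?U (Suc n - k) = 2 * x * (?G k * ?U (n - k)) - ?G k * ?U (n - 1 - k)"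
      by (simp add: algebra_simps)
  qed simp
  then have "(\<Sum>k<n. ?G k * ?U (Suc n - k)) =
      2 * x * (\<Sum>k<n. ?G k * ?U (n - k)) - chebyshev_T_slope n x y"
    by (simp add: chebyshev_T_slope_def sum_subtractf sum_distrib_left)
  moreover have "chebyshev_T_slope (Suc (Suc n)) x y =
      (\<Sum>k<n. ?G k * ?U (Suc n - k)) + ?G n * (2 * x) + ?G (Suc n)"
    by (simp add: chebyshev_T_slope_def Suc_diff_le)
  moreover have "chebyshev_T_slope (Suc n) x y = (\<Sum>k<n. ?G k * ?U (n - k)) + ?G n"
    by (simp add: chebyshev_T_slope_def)
  ultimately show ?thesis
    by (simp add: cheb_weight_def algebra_simps)
qed

lemma chebyshev_T_diff: "chebyshev_T n x - chebyshev_T n y = (x - y) * chebyshev_T_slope n x y"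
proof (induction n rule: induct_nat_012)
  case (ge2 n)
  have "chebyshev_T (Suc (Suc n)) x - chebyshev_T (Suc (Suc n)) y =
      2 * x * (chebyshev_T (Suc n) x - chebyshev_T (Suc n) y) + 2 * (x - y) * chebyshev_T (Suc n) y
      - (chebyshev_T n x - chebyshev_T n y)"
    by (simp add: algebra_simps)
  also have "\<dots> = (x - y) * chebyshev_T_slope (Suc (Suc n)) x y"
    unfolding ge2 chebyshev_T_slope_Suc_Suc by (simp add: algebra_simps)
  finally show ?case .
qed (simp_all add: chebyshev_T_slope_def cheb_weight_def)

lemma divdiff_mat_eq_slope:
  assumes diff: "\<And>a b. h a - h b = (a - b) * g a b" and cont: "\<And>b. isCont (\<lambda>a. g a b) b"
  shows "divdiff_mat h lam i j = g (lam i) (lam j)"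
proof (cases "lam i = lam j")
  case True
  have "DERIV h (lam i) :> g (lam i) (lam i)"
    unfolding CARAT_DERIV
    by (intro exI[of _ "\<lambda>a. g a (lam i)"]) (simp add: diff cont mult.commute)
  then show ?thesis
    using True by (simp add: divdiff_mat_def DERIV_imp_deriv)
next
  case False
  then show ?thesis
    by (simp add: divdiff_mat_def diff)
qed

lemma cheb_f_diff: "cheb_f \<epsilon> a - cheb_f \<epsilon> b = - 2 * (a - b) / (1 - \<epsilon>)"
  unfolding cheb_f_def by (simp add: diff_divide_distrib[symmetric])

lemma one_le_cheb_f_0: "0 \<le> \<epsilon> \<Longrightarrow> \<epsilon> < 1 \<Longrightarrow> 1 \<le> cheb_f \<epsilon> 0"
  by (simp add: cheb_f_def field_simps)

lemma cheb_f_bounds: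
  assumes "0 \<le> \<epsilon>" "\<epsilon> < 1" "0 \<le> x" "x \<le> 1"
  shows "-1 \<le> cheb_f \<epsilon> x \<and> cheb_f \<epsilon> x \<le> cheb_f \<epsilon> 0"
  using assms by (auto simp: cheb_f_def le_divide_eq intro!: divide_right_mono)

lemma C_poly_diff:
  "C_poly n \<epsilon> a - C_poly n \<epsilon> b = (a - b) *
     (2 / ((1 - \<epsilon>) * chebyshev_T n (cheb_f \<epsilon> 0)) * chebyshev_T_slope n (cheb_f \<epsilon> a) (cheb_f \<epsilon> b))"
  (is "_ = (a - b) * (2 / ((1 - \<epsilon>) * ?T0) * ?S)")
proof -
  have "C_poly n \<epsilon> a - C_poly n \<epsilon> b =
      - (chebyshev_T n (cheb_f \<epsilon> a) - chebyshev_T n (cheb_f \<epsilon> b)) / ?T0"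
    unfolding C_poly_def poly_cheb_T by (simp add: diff_divide_distrib)
  also have "\<dots> = 2 * (a - b) / (1 - \<epsilon>) * ?S / ?T0"
    by (simp add: chebyshev_T_diff cheb_f_diff minus_divide_left algebra_simps)
  also have "\<dots> = (a - b) * (2 / ((1 - \<epsilon>) * ?T0) * ?S)"
    by (simp add: divide_divide_eq_left mult_ac)
  finally show ?thesis .
qed

lemma divdiff_mat_C_poly:
  "divdiff_mat (C_poly n \<epsilon>) lam i j = 2 / ((1 - \<epsilon>) * chebyshev_T n (cheb_f \<epsilon> 0)) *
     chebyshev_T_slope n (cheb_f \<epsilon> (lam i)) (cheb_f \<epsilon> (lam j))"
  by (rule divdiff_mat_eq_slope[OF C_poly_diff])
     (unfold chebyshev_T_slope_def cheb_f_def divide_inverse, intro continuous_intros)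

lemma gamma2_le:
  fixes m :: nat and v w :: "nat \<Rightarrow> nat \<Rightarrow> real"
  assumes "0 \<le> c" and "\<forall>i<d. \<forall>j<d. M i j = (\<Sum>k<m. v i k * w j k)"
    and "\<forall>i<d. (\<Sum>k<m. (v i k)\<^sup>2) \<le> c" and "\<forall>j<d. (\<Sum>k<m. (w j k)\<^sup>2) \<le> c"
  shows "gamma2 d M \<le> c"
  unfolding gamma2_def using assms
  by (intro cInf_lower bdd_belowI[of _ 0]) blast+

lemma gamma2_le_sqrt_mult:
  fixes m :: nat and v w :: "nat \<Rightarrow> nat \<Rightarrow> real"
  assumes fac: "\<forall>i<d. \<forall>j<d. M i j = (\<Sum>k<m. v i k * w j k)"
    and v: "\<forall>i<d. (\<Sum>k<m. (v i k)\<^sup>2) \<le> a" and w: "\<forall>j<d. (\<Sum>k<m. (w j k)\<^sup>2) \<le> b"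
    and "0 < a" "0 < b"
  shows "gamma2 d M \<le> sqrt (a * b)"
proof (rule gamma2_le)
  define p q where "p = sqrt a" and "q = sqrt b"
  have pq: "0 < p" "0 < q" "a = p\<^sup>2" "b = q\<^sup>2" "sqrt (a * b) = p * q"
    unfolding p_def q_def using \<open>0 < a\<close> \<open>0 < b\<close> by (simp_all add: real_sqrt_mult)
  define t where "t = sqrt (q / p)"
  have "0 < t" "t\<^sup>2 = q / p"
    unfolding t_def using pq by simp_all
  then have t: "0 < t" "t\<^sup>2 * a = sqrt (a * b)" "b / t\<^sup>2 = sqrt (a * b)"
    using pq by (simp_all add: power2_eq_square)
  show "\<forall>i<d. \<forall>j<d. M i j = (\<Sum>k<m. (t * v i k) * (w j k / t))"
    using fac t by simp
  show "\<forall>i<d. (\<Sum>k<m. (t * v i k)\<^sup>2) \<le> sqrt (a * b)"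
    using v t(1) by (simp add: power_mult_distrib flip: sum_distrib_left t(2))
  show "\<forall>j<d. (\<Sum>k<m. (w j k / t)\<^sup>2) \<le> sqrt (a * b)"
    using w t(1) by (simp add: power_divide divide_right_mono flip: sum_divide_distrib t(3))
qed (use assms in simp)

lemma sum_squares_lessThan:
  "(\<Sum>k<n. (real (n - k))\<^sup>2) = real n * (real n + 1) * (2 * real n + 1) / 6"
proof (induction n)
  case (Suc n)
  have "(\<Sum>k<Suc n. (real (Suc n - k))\<^sup>2) = (real (Suc n))\<^sup>2 + (\<Sum>k<n. (real (n - k))\<^sup>2)"
    by (subst sum.lessThan_Suc_shift) simp
  then show ?case
    using Suc by (simp add: field_simps power2_eq_square)
qed simp

lemma sum_one_then_four:
  "1 \<le> n \<Longrightarrow> (\<Sum>k<n. if k = 0 then 1 else 4 :: real) = 4 * real n - 3"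
  by (induction n rule: dec_induct) auto

lemma sum_sq_chebyshev_U_scaled_le:
  fixes Y t :: real
  assumes Y: "1 \<le> Y" and t: "-1 \<le> t" "t \<le> Y"
  defines "r \<equiv> Y + sqrt (Y\<^sup>2 - 1)"
  shows "(\<Sum>k<n. (r ^ k * chebyshev_U (n - 1 - k) t)\<^sup>2) \<le>
    (r ^ (n - 1))\<^sup>2 * (real n * (real n + 1) * (2 * real n + 1) / 6)"
proof -
  have r: "1 \<le> r"
    unfolding r_def using Y by (simp add: add_increasing2 one_le_power)
  have "(\<Sum>k<n. (r ^ k * chebyshev_U (n - 1 - k) t)\<^sup>2) \<le> (\<Sum>k<n. (r ^ (n - 1))\<^sup>2 * (real (n - k))\<^sup>2)"
  proof (rule sum_mono)
    fix k assume "k \<in> {..<n}"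
    then have "\<bar>r ^ k * chebyshev_U (n - 1 - k) t\<bar> \<le> r ^ k * (real (n - k) * r ^ (n - 1 - k))"
      using abs_chebyshev_U_le[OF Y t, of "n - 1 - k"] r
      by (auto simp: abs_mult Suc_diff_Suc r_def intro!: mult_left_mono)
    also have "\<dots> = r ^ (n - 1) * real (n - k)"
      using \<open>k \<in> {..<n}\<close> by (simp flip: power_add)
    finally have "(r ^ k * chebyshev_U (n - 1 - k) t)\<^sup>2 \<le> (r ^ (n - 1) * real (n - k))\<^sup>2"
      by (metis abs_ge_zero power2_abs power_mono)
    then show "(r ^ k * chebyshev_U (n - 1 - k) t)\<^sup>2 \<le> (r ^ (n - 1))\<^sup>2 * (real (n - k))\<^sup>2"
      by (simp add: power_mult_distrib)
  qed
  then show ?thesis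
    by (simp only: sum_squares_lessThan flip: sum_distrib_left)
qed

lemma sum_sq_cheb_weight_scaled_le:
  fixes Y t :: real
  assumes Y: "1 \<le> Y" and t: "-1 \<le> t" "t \<le> Y" and n: "1 \<le> n"
  defines "r \<equiv> Y + sqrt (Y\<^sup>2 - 1)"
  shows "(\<Sum>k<n. (cheb_weight k t / r ^ k)\<^sup>2) \<le> 4 * real n - 3"
proof -
  have "(\<Sum>k<n. (cheb_weight k t / r ^ k)\<^sup>2) \<le> (\<Sum>k<n. if k = 0 then 1 else 4)"
  proof (rule sum_mono)
    fix k
    have "1 \<le> r"
      unfolding r_def using Y by (simp add: add_increasing2 one_le_power)
    then have "\<bar>cheb_weight k t / r ^ k\<bar> \<le> (if k = 0 then 1 else 2)"
      using abs_chebyshev_T_le[OF Y t, of k] by (auto simp: cheb_weight_def r_def abs_mult divide_le_eq)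
    then have "(cheb_weight k t / r ^ k)\<^sup>2 \<le> (if k = 0 then 1 else 2)\<^sup>2"
      by (metis abs_ge_zero power2_abs power_mono)
    then show "(cheb_weight k t / r ^ k)\<^sup>2 \<le> (if k = 0 then 1 else 4)"
      by (simp split: if_splits)
  qed
  then show ?thesis
    using n by (simp only: sum_one_then_four)
qed

lemma gamma2_chebyshev_T_slope_le:
  fixes Y s :: real and y :: "nat \<Rightarrow> real"
  assumes Y: "1 \<le> Y" and n: "1 \<le> n" and s: "s \<noteq> 0" and y: "\<forall>i<d. -1 \<le> y i \<and> y i \<le> Y"
  shows "gamma2 d (\<lambda>i j. s * chebyshev_T_slope n (y i) (y j)) \<le> \<bar>s\<bar> * (Y + sqrt (Y\<^sup>2 - 1)) ^ (n - 1) *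
    sqrt (real n * (real n + 1) * (2 * real n + 1) / 6 * (4 * real n - 3))"
proof -
  define r where "r = Y + sqrt (Y\<^sup>2 - 1)"
  have r: "1 \<le> r"
    unfolding r_def using Y by (simp add: add_increasing2 one_le_power)
  define A where "A = real n * (real n + 1) * (2 * real n + 1) / 6"
  define B where "B = 4 * real n - 3"
  define v where "v i k = r ^ k * chebyshev_U (n - 1 - k) (y i)" for i k
  define w where "w j k = s * (cheb_weight k (y j) / r ^ k)" for j k
  have "s * chebyshev_T_slope n (y i) (y j) = (\<Sum>k<n. v i k * w j k)" for i j
    unfolding chebyshev_T_slope_def v_def w_def sum_distrib_left
    using r by (intro sum.cong) auto
  moreover have "(\<Sum>k<n. (v i k)\<^sup>2) \<le> (r ^ (n - 1))\<^sup>2 * A" if "i < d" for i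
    using sum_sq_chebyshev_U_scaled_le[OF Y, of "y i" n] y that by (simp add: v_def r_def A_def)
  moreover have "(\<Sum>k<n. (w j k)\<^sup>2) \<le> s\<^sup>2 * B" if "j < d" for j
  proof -
    have "(\<Sum>k<n. (w j k)\<^sup>2) = s\<^sup>2 * (\<Sum>k<n. (cheb_weight k (y j) / r ^ k)\<^sup>2)"
      by (simp only: w_def power_mult_distrib sum_distrib_left)
    also have "\<dots> \<le> s\<^sup>2 * B"
      using sum_sq_cheb_weight_scaled_le[OF Y _ _ n, of "y j"] y that
      by (intro mult_left_mono) (simp_all add: r_def B_def)
    finally show ?thesis .
  qed
  moreover have "0 < A" "0 < B"
    using n by (simp_all add: A_def B_def)
  ultimately have "gamma2 d (\<lambda>i j. s * chebyshev_T_slope n (y i) (y j)) \<le>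
      sqrt ((r ^ (n - 1))\<^sup>2 * A * (s\<^sup>2 * B))"
    using s r by (intro gamma2_le_sqrt_mult[where m = n and v = v and w = w]) auto
  also have "(r ^ (n - 1))\<^sup>2 * A * (s\<^sup>2 * B) = (\<bar>s\<bar> * r ^ (n - 1))\<^sup>2 * (A * B)"
    by (simp add: power_mult_distrib)
  also have "sqrt \<dots> = \<bar>s\<bar> * r ^ (n - 1) * sqrt (A * B)"
    using r by (simp add: real_sqrt_mult)
  finally show ?thesis
    by (simp only: r_def A_def B_def)
qed

lemma four_sqrt_sum_squares_le:
  fixes N :: real
  assumes "2 \<le> N"
  shows "4 * sqrt (N * (N + 1) * (2 * N + 1) / 6 * (4 * N - 3)) \<le> 6 * N\<^sup>2 - 3"
proof (rule power2_le_imp_le)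
  define t where "t = N - 2"
  have "0 \<le> t" "N = t + 2"
    using assms by (simp_all add: t_def)
  have "(6 * N\<^sup>2 - 3)\<^sup>2 - (4 * sqrt (N * (N + 1) * (2 * N + 1) / 6 * (4 * N - 3)))\<^sup>2
     = (88 * t^4 + 608 * t^3 + 1400 * t\<^sup>2 + 1168 * t + 246) / 6"
    using \<open>0 \<le> t\<close> unfolding \<open>N = t + 2\<close> by (simp add: power_mult_distrib field_simps eval_nat_numeral)
  moreover have "0 \<le> 88 * t^4 + 608 * t^3 + 1400 * t\<^sup>2 + 1168 * t + 246"
    using \<open>0 \<le> t\<close> by simp
  ultimately show "(4 * sqrt (N * (N + 1) * (2 * N + 1) / 6 * (4 * N - 3)))\<^sup>2 \<le> (6 * N\<^sup>2 - 3)\<^sup>2"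
    by simp
  show "0 \<le> 6 * N\<^sup>2 - 3"
    using mult_mono[OF assms assms] assms by (simp add: power2_eq_square)
qed

lemma C_poly_factorization_constant_le:
  fixes \<epsilon> :: real
  assumes "0 \<le> \<epsilon>" "\<epsilon> < 1" "1 \<le> n"
  defines "Y \<equiv> cheb_f \<epsilon> 0"
  shows "2 / ((1 - \<epsilon>) * chebyshev_T n Y) * (Y + sqrt (Y\<^sup>2 - 1)) ^ (n - 1) *
      sqrt (real n * (real n + 1) * (2 * real n + 1) / 6 * (4 * real n - 3)) \<le> 6 * (real n)\<^sup>2 - 3"
proof -
  have Y: "(1 - \<epsilon>) * Y = 1 + \<epsilon>" "1 \<le> Y"
    using assms by (simp_all add: Y_def cheb_f_def field_simps)
  define r where "r = Y + sqrt (Y\<^sup>2 - 1)"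
  have "r ^ n \<le> 2 * chebyshev_T n Y" "Y \<le> r"
    using chebyshev_T_ge[OF Y(2)] Y(2) by (simp_all add: r_def)
  consider "n = 1" | "2 \<le> n"
    using assms by linarith
  then show ?thesis
  proof cases
    case 1
    \<comment> \<open>The bound 4 of the case n \<ge> 2 is too weak here; the factor is exactly 2 / (1 + \<epsilon>).\<close>
    have "2 / ((1 - \<epsilon>) * Y) \<le> 3"
      using Y assms(1) by (simp add: divide_le_eq)
    with 1 show ?thesis
      by simp
  next
    case 2
    have D: "0 < (1 - \<epsilon>) * chebyshev_T n Y"
      using chebyshev_T_pos[OF Y(2)] assms(2) by simp
    have "1 \<le> (1 - \<epsilon>) * r"
      using Y assms(1,2) mult_left_mono[OF \<open>Y \<le> r\<close>, of "1 - \<epsilon>"] by simp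
    then have "2 * r ^ (n - 1) \<le> 2 * ((1 - \<epsilon>) * r) * r ^ (n - 1)"
      using Y(2) \<open>Y \<le> r\<close> by simp
    also have "\<dots> = (1 - \<epsilon>) * (2 * r ^ n)"
      using 2 by (simp add: power_eq_if)
    also have "\<dots> \<le> (1 - \<epsilon>) * (4 * chebyshev_T n Y)"
      using \<open>r ^ n \<le> 2 * chebyshev_T n Y\<close> assms(2) by (intro mult_left_mono) auto
    finally have "2 / ((1 - \<epsilon>) * chebyshev_T n Y) * r ^ (n - 1) \<le> 4"
      using D by (simp add: pos_divide_le_eq mult_ac)
    then have "2 / ((1 - \<epsilon>) * chebyshev_T n Y) * r ^ (n - 1) *
        sqrt (real n * (real n + 1) * (2 * real n + 1) / 6 * (4 * real n - 3)) \<le>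
        4 * sqrt (real n * (real n + 1) * (2 * real n + 1) / 6 * (4 * real n - 3))"
      using 2 by (intro mult_right_mono) simp_all
    also have "\<dots> \<le> 6 * (real n)\<^sup>2 - 3"
      using 2 by (intro four_sqrt_sum_squares_le) simp
    finally show ?thesis
      unfolding r_def .
  qed
qed

theorem lemma7:
  fixes \<epsilon> :: real and n d :: nat and lam :: "nat \<Rightarrow> real"
  assumes "0 \<le> \<epsilon>" and "\<epsilon> \<le> 1/3" and "n \<ge> 1"
    and "\<forall>i<d. 0 \<le> lam i \<and> lam i \<le> 1"
  shows "gamma2 d (divdiff_mat (C_poly n \<epsilon>) lam) \<le> 6 * (real n)\<^sup>2 - 3"
proof -
  have \<epsilon>: "0 \<le> \<epsilon>" "\<epsilon> < 1"
    using assms(1,2) by simp_all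
  define Y where "Y = cheb_f \<epsilon> 0"
  define s where "s = 2 / ((1 - \<epsilon>) * chebyshev_T n Y)"
  have Y: "1 \<le> Y"
    using one_le_cheb_f_0[OF \<epsilon>] by (simp add: Y_def)
  have "0 < s"
    using chebyshev_T_pos[OF Y] \<epsilon> by (simp add: s_def)
  have y: "\<forall>i<d. -1 \<le> cheb_f \<epsilon> (lam i) \<and> cheb_f \<epsilon> (lam i) \<le> Y"
    using cheb_f_bounds[OF \<epsilon>] assms(4) by (simp add: Y_def)
  have M: "divdiff_mat (C_poly n \<epsilon>) lam =
      (\<lambda>i j. s * chebyshev_T_slope n (cheb_f \<epsilon> (lam i)) (cheb_f \<epsilon> (lam j)))"
    unfolding s_def Y_def by (intro ext) (rule divdiff_mat_C_poly)
  have "gamma2 d (divdiff_mat (C_poly n \<epsilon>) lam) \<le> \<bar>s\<bar> * (Y + sqrt (Y\<^sup>2 - 1)) ^ (n - 1) *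
      sqrt (real n * (real n + 1) * (2 * real n + 1) / 6 * (4 * real n - 3))"
    unfolding M using \<open>0 < s\<close> by (intro gamma2_chebyshev_T_slope_le[OF Y assms(3) _ y]) simp
  also have "\<dots> \<le> 6 * (real n)\<^sup>2 - 3"
    using C_poly_factorization_constant_le[OF \<epsilon> assms(3), folded Y_def, folded s_def] \<open>0 < s\<close>
    by simp
  finally show ?thesis .
qed

end
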